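(* Let $v$ be a typical weight and let $X$ be a reflexive initial space such that for every $f\in X$ and $0\le r<1$ the function $f_r(z)=f(rz)$ is in $X$ and $\sup_{0\le r<1}\|f_r\|_X\le C\|f\|_X$ for a constant $C$ independent of $f$. Let $T$ be an intrinsic operator on $\mathcal{H}(\mathbb{D})$. (a) If $Tf_r\in H_{v,0}$ for all $f\in X$, $0\le r<1$, then $T:X\to H_v$ is bounded if and only if $T:X\to H_{v,0}$ is bounded. (b) If $Tf_r\in\mathcal{B}_{v,0}$ for all $f\in X$, $0\le r<1$, then $T:X\to\mathcal{B}_v$ is bounded if and only if $T:X\to\mathcal{B}_{v,0}$ is bounded.
   Context: $\mathcal{H}(\mathbb{D})$ is the space of holomorphic functions on the unit disk $\mathbb{D}$ with the topology $\tau_{uc}$ of uniform convergence on compact subsets. A linear operator $T$ on $\mathcal{H}(\mathbb{D})$ is intrinsic if it maps $\tau_{uc}$-convergent sequences to $\tau_{uc}$-convergent sequences. An initial space is a Banach space $X\subset\mathcal{H}(\mathbb{D})$ containing the polynomials such that every sequence in the closed unit ball of $X$ has a subsequence converging in $\tau_{uc}$ to some function in $X$. A typical weight is a continuous radial $v:\mathbb{D}\to(0,1]$, non-increasing in $|z|$, with $v(z)\to0$ as $|z|\to1$. $H_v=\{f:\sup_zv(z)|f(z)|<\infty\}$ (norm that supremum), $\mathcal{B}_v=\{f:\sup_zv(z)|f'(z)|<\infty\}$ (norm $|f(0)|+\sup_zv(z)|f'(z)|$), and $H_{v,0}$, $\mathcal{B}_{v,0}$ the subspaces where $v(z)|f(z)|\to0$,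 resp. $v(z)|f'(z)|\to0$, as $|z|\to1$. *)

theory Defs
  imports "HOL-Analysis.Analysis" "HOL-Computational_Algebra.Polynomial"
begin

text \<open>Elements of H(D) are represented canonically as functions complex => complex
  that are holomorphic on the unit disk and vanish outside it.\<close>

definition disk :: "complex set" where "disk = ball 0 1"

definition restr :: "(complex \<Rightarrow> complex) \<Rightarrow> complex \<Rightarrow> complex" where
  "restr f = (\<lambda>z. if z \<in> disk then f z else 0)"

definition HD :: "(complex \<Rightarrow> complex) set" where
  "HD = {f. f holomorphic_on disk \<and> (\<forall>z. z \<notin> disk \<longrightarrow> f z = 0)}"

definition dil :: "real \<Rightarrow> (complex \<Rightarrow> complex) \<Rightarrow> complex \<Rightarrow> complex" where
  "dil r f = restr (\<lambda>z. f (of_real r * z))"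

definition uc_conv :: "(nat \<Rightarrow> complex \<Rightarrow> complex) \<Rightarrow> (complex \<Rightarrow> complex) \<Rightarrow> bool" where
  "uc_conv F f \<longleftrightarrow> (\<forall>K. compact K \<and> K \<subseteq> disk \<longrightarrow> uniform_limit K F f sequentially)"

definition intrinsic :: "((complex \<Rightarrow> complex) \<Rightarrow> complex \<Rightarrow> complex) \<Rightarrow> bool" where
  "intrinsic T \<longleftrightarrow>
     (\<forall>f\<in>HD. T f \<in> HD) \<and>
     (\<forall>f\<in>HD. \<forall>g\<in>HD. T (\<lambda>z. f z + g z) = (\<lambda>z. T f z + T g z)) \<and>
     (\<forall>c. \<forall>f\<in>HD. T (\<lambda>z. c * f z) = (\<lambda>z. c * T f z)) \<and>
     (\<forall>F f. (\<forall>n. F n \<in> HD) \<and> f \<in> HD \<and> uc_conv F f \<longrightarrow>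
        (\<exists>g\<in>HD. uc_conv (\<lambda>n. T (F n)) g))"

definition banach_subspace :: "(complex \<Rightarrow> complex) set \<Rightarrow> ((complex \<Rightarrow> complex) \<Rightarrow> real) \<Rightarrow> bool" where
  "banach_subspace X nX \<longleftrightarrow>
     X \<subseteq> HD \<and> (\<lambda>z. 0) \<in> X \<and>
     (\<forall>f\<in>X. \<forall>g\<in>X. (\<lambda>z. f z + g z) \<in> X) \<and>
     (\<forall>c. \<forall>f\<in>X. (\<lambda>z. c * f z) \<in> X) \<and>
     (\<forall>f\<in>X. 0 \<le> nX f) \<and>
     (\<forall>f\<in>X. nX f = 0 \<longleftrightarrow> f = (\<lambda>z. 0)) \<and>
     (\<forall>c. \<forall>f\<in>X. nX (\<lambda>z. c * f z) = norm c * nX f) \<and>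
     (\<forall>f\<in>X. \<forall>g\<in>X. nX (\<lambda>z. f z + g z) \<le> nX f + nX g) \<and>
     (\<forall>F. (\<forall>n. F n \<in> X) \<and>
          (\<forall>e>0. \<exists>N. \<forall>m\<ge>N. \<forall>n\<ge>N. nX (\<lambda>z. F m z - F n z) < e) \<longrightarrow>
          (\<exists>f\<in>X. (\<lambda>n. nX (\<lambda>z. F n z - f z)) \<longlonglongrightarrow> 0))"

definition initial_space :: "(complex \<Rightarrow> complex) set \<Rightarrow> ((complex \<Rightarrow> complex) \<Rightarrow> real) \<Rightarrow> bool" where
  "initial_space X nX \<longleftrightarrow>
     banach_subspace X nX \<and>
     (\<forall>p :: complex poly. restr (poly p) \<in> X) \<and>
     (\<forall>F. (\<forall>n. F n \<in> X \<and> nX (F n) \<le> 1) \<longrightarrow>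
        (\<exists>(\<sigma>::nat \<Rightarrow> nat) f. strict_mono \<sigma> \<and> f \<in> X \<and> uc_conv (F \<circ> \<sigma>) f))"

definition dual_sp :: "(complex \<Rightarrow> complex) set \<Rightarrow> ((complex \<Rightarrow> complex) \<Rightarrow> real)
     \<Rightarrow> ((complex \<Rightarrow> complex) \<Rightarrow> complex) set" where
  "dual_sp X nX = {\<phi>.
     (\<forall>f\<in>X. \<forall>g\<in>X. \<phi> (\<lambda>z. f z + g z) = \<phi> f + \<phi> g) \<and>
     (\<forall>c. \<forall>f\<in>X. \<phi> (\<lambda>z. c * f z) = c * \<phi> f) \<and>
     (\<exists>K. \<forall>f\<in>X. norm (\<phi> f) \<le> K * nX f)}"

definition dual_norm :: "(complex \<Rightarrow> complex) set \<Rightarrow> ((complex \<Rightarrow> complex) \<Rightarrow> real)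
     \<Rightarrow> ((complex \<Rightarrow> complex) \<Rightarrow> complex) \<Rightarrow> real" where
  "dual_norm X nX \<phi> = (SUP f\<in>{f\<in>X. nX f \<le> 1}. norm (\<phi> f))"

definition bidual_sp :: "(complex \<Rightarrow> complex) set \<Rightarrow> ((complex \<Rightarrow> complex) \<Rightarrow> real)
     \<Rightarrow> (((complex \<Rightarrow> complex) \<Rightarrow> complex) \<Rightarrow> complex) set" where
  "bidual_sp X nX = {\<Phi>.
     (\<forall>\<phi>\<in>dual_sp X nX. \<forall>\<psi>\<in>dual_sp X nX. \<Phi> (\<lambda>f. \<phi> f + \<psi> f) = \<Phi> \<phi> + \<Phi> \<psi>) \<and>
     (\<forall>c. \<forall>\<phi>\<in>dual_sp X nX. \<Phi> (\<lambda>f. c * \<phi> f) = c * \<Phi> \<phi>) \<and>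
     (\<exists>K. \<forall>\<phi>\<in>dual_sp X nX. norm (\<Phi> \<phi>) \<le> K * dual_norm X nX \<phi>)}"

definition reflexive_sp :: "(complex \<Rightarrow> complex) set \<Rightarrow> ((complex \<Rightarrow> complex) \<Rightarrow> real) \<Rightarrow> bool" where
  "reflexive_sp X nX \<longleftrightarrow>
     (\<forall>\<Phi>\<in>bidual_sp X nX. \<exists>x\<in>X. \<forall>\<phi>\<in>dual_sp X nX. \<Phi> \<phi> = \<phi> x)"

definition typical_weight :: "(complex \<Rightarrow> real) \<Rightarrow> bool" where
  "typical_weight v \<longleftrightarrow>
     continuous_on disk v \<and>
     (\<forall>z\<in>disk. 0 < v z \<and> v z \<le> 1) \<and>
     (\<forall>z\<in>disk. \<forall>w\<in>disk. norm z = norm w \<longrightarrow> v z = v w) \<and>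
     (\<forall>z\<in>disk. \<forall>w\<in>disk. norm z \<le> norm w \<longrightarrow> v w \<le> v z) \<and>
     (v \<longlongrightarrow> 0) (filtercomap norm (at_left 1))"

definition Hv :: "(complex \<Rightarrow> real) \<Rightarrow> (complex \<Rightarrow> complex) set" where
  "Hv v = {f\<in>HD. bounded ((\<lambda>z. v z * norm (f z)) ` disk)}"

definition Hv_norm :: "(complex \<Rightarrow> real) \<Rightarrow> (complex \<Rightarrow> complex) \<Rightarrow> real" where
  "Hv_norm v f = (SUP z\<in>disk. v z * norm (f z))"

definition Hv0 :: "(complex \<Rightarrow> real) \<Rightarrow> (complex \<Rightarrow> complex) set" where
  "Hv0 v = {f\<in>HD. ((\<lambda>z. v z * norm (f z)) \<longlongrightarrow> 0) (filtercomap norm (at_left 1))}"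

definition Bv :: "(complex \<Rightarrow> real) \<Rightarrow> (complex \<Rightarrow> complex) set" where
  "Bv v = {f\<in>HD. bounded ((\<lambda>z. v z * norm (deriv f z)) ` disk)}"

definition Bv_norm :: "(complex \<Rightarrow> real) \<Rightarrow> (complex \<Rightarrow> complex) \<Rightarrow> real" where
  "Bv_norm v f = norm (f 0) + (SUP z\<in>disk. v z * norm (deriv f z))"

definition Bv0 :: "(complex \<Rightarrow> real) \<Rightarrow> (complex \<Rightarrow> complex) set" where
  "Bv0 v = {f\<in>HD. ((\<lambda>z. v z * norm (deriv f z)) \<longlongrightarrow> 0) (filtercomap norm (at_left 1))}"

definition bounded_op :: "(complex \<Rightarrow> complex) set \<Rightarrow> ((complex \<Rightarrow> complex) \<Rightarrow> real)
     \<Rightarrow> ((complex \<Rightarrow> complex) \<Rightarrow> complex \<Rightarrow> complex)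
     \<Rightarrow> (complex \<Rightarrow> complex) set \<Rightarrow> ((complex \<Rightarrow> complex) \<Rightarrow> real) \<Rightarrow> bool" where
  "bounded_op X nX T Y nY \<longleftrightarrow>
     (\<forall>f\<in>X. T f \<in> Y) \<and> (\<exists>C. \<forall>f\<in>X. nY (T f) \<le> C * nX f)"

end

theory Submission
  imports Defs "HOL-Complex_Analysis.Cauchy_Integral_Formula"
begin

text \<open>
  Suppose \<open>T : X \<rightarrow> H\<^sub>v\<close> is bounded, \<open>f \<in> X\<close>, and \<open>v(z) |Tf(z)|\<close> does not tend to \<open>0\<close> as
  \<open>|z| \<rightarrow> 1\<close>. The functionals \<open>g \<mapsto> v(z) Tg(z)\<close>, \<open>z\<close> in the disk, are uniformly bounded on \<open>X\<close>;
  along an ultrafilter of points approaching the boundary on which \<open>v(z) |Tf(z)| \<ge> \<epsilon>\<close>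
  they converge pointwise to some \<open>\<psi> \<in> X*\<close>. Since every \<open>Tf\<^sub>r\<close> lies in \<open>H\<^sub>v\<^sub>,\<^sub>0\<close>, \<open>\<psi>\<close>
  vanishes on all dilations \<open>f\<^sub>r\<close>, while \<open>|\<psi> f| \<ge> \<epsilon>\<close>. But the dilations, being bounded in
  \<open>X\<close>, converge weakly to \<open>f\<close>: by reflexivity the ultralimit \<open>\<phi> \<mapsto> lim\<^sub>r\<^sub>\<rightarrow>\<^sub>1 \<phi>(f\<^sub>r)\<close> is
  evaluation at some \<open>x \<in> X\<close>, and testing with point evaluations, which are continuous on
  an initial space, gives \<open>x = f\<close>. The Bloch case is the same argument applied to
  \<open>g \<mapsto> v(z) (Tg)'(z)\<close>.
\<close>

section \<open>Ultrafilters\<close>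

definition ultrafilter :: "'a filter \<Rightarrow> bool" where
  "ultrafilter F \<longleftrightarrow> F \<noteq> bot \<and> (\<forall>P. eventually P F \<or> eventually (\<lambda>x. \<not> P x) F)"

lemma ultrafilter_nontrivial: "ultrafilter U \<Longrightarrow> U \<noteq> bot"
  by (simp add: ultrafilter_def)

lemma ultrafilter_if_maximal:
  assumes "F \<noteq> bot" and max: "\<And>G. G \<noteq> bot \<Longrightarrow> G \<le> F \<Longrightarrow> G = F"
  shows "ultrafilter F"
  unfolding ultrafilter_def
proof (intro conjI allI assms(1) disjCI)
  fix P
  let ?G = "inf F (principal {x. P x})"
  assume "\<not> eventually (\<lambda>x. \<not> P x) F"
  then have "?G \<noteq> bot"
    by (simp add: trivial_limit_def eventually_inf_principal not_eventually)
  then have "?G = F"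
    by (rule max) simp
  moreover have "eventually P ?G"
    by (simp add: eventually_inf_principal)
  ultimately show "eventually P F"
    by simp
qed

lemma ultrafilter_exists_le:
  fixes F :: "'a filter"
  assumes "F \<noteq> bot"
  shows "\<exists>U\<le>F. ultrafilter U"
proof -
  let ?A = "{G. G \<noteq> bot \<and> G \<le> F}"
  have "\<exists>U\<in>?A. \<forall>G\<in>?A. G \<le> U \<longrightarrow> G = U"
  proof (rule predicate_Zorn)
    show "partial_order_on ?A (relation_of (\<lambda>U G. G \<le> U) ?A)"
      by (rule partial_order_on_relation_ofI) auto
  next
    fix C assume C: "C \<in> Chains (relation_of (\<lambda>U G. G \<le> U) ?A)"
    then have C_A: "C \<subseteq> ?A"
      by (rule Chains_relation_of)
    have comparable: "G \<le> H \<or> H \<le> G" if "G \<in> C" "H \<in> C" for G H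
      using C that unfolding Chains_def relation_of_def by auto
    show "\<exists>U\<in>?A. \<forall>G\<in>C. U \<le> G"
    proof (cases "C = {}")
      case True
      then show ?thesis
        using assms by auto
    next
      case False
      have "eventually (\<lambda>x. False) (Inf C) \<longleftrightarrow> (\<exists>G\<in>C. eventually (\<lambda>x. False) G)"
        using comparable by (intro eventually_Inf_base[OF False]) (metis inf.absorb_iff2 inf.orderE)
      then have "Inf C \<noteq> bot"
        using C_A by (auto simp: trivial_limit_def)
      moreover obtain G where "G \<in> C"
        using False by blast
      then have "Inf C \<le> F"
        using C_A by (blast intro: Inf_lower2)
      ultimately show ?thesis
        by (blast intro: Inf_lower)
    qed
  qed
  then obtain U where U: "U \<in> ?A" and max: "\<And>G. G \<in> ?A \<Longrightarrow> G \<le> U \<Longrightarrow> G = U"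
    by blast
  have "ultrafilter U"
  proof (rule ultrafilter_if_maximal)
    show "U \<noteq> bot"
      using U by simp
    fix G assume "G \<noteq> bot" "G \<le> U"
    then show "G = U"
      using U by (intro max) auto
  qed
  then show ?thesis
    using U by blast
qed

lemma ultrafilter_not_tendsto_zero:
  fixes g :: "'a \<Rightarrow> 'b::real_normed_vector"
  assumes "\<not> (g \<longlongrightarrow> 0) F"
  obtains e W where "e > 0" "ultrafilter W" "W \<le> F" "eventually (\<lambda>x. e \<le> norm (g x)) W"
proof -
  obtain e where e: "e > 0" "\<not> eventually (\<lambda>x. dist (g x) 0 < e) F"
    using assms unfolding tendsto_iff by blast
  let ?F = "inf F (principal {x. e \<le> norm (g x)})"
  have "?F \<noteq> bot"
  proof
    assume "?F = bot"
    then have "eventually (\<lambda>x. \<not> e \<le> norm (g x)) F"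
      unfolding trivial_limit_def eventually_inf_principal by simp
    then have "eventually (\<lambda>x. dist (g x) 0 < e) F"
      by (rule eventually_mono) simp
    with e(2) show False ..
  qed
  then obtain W where "W \<le> ?F" "ultrafilter W"
    using ultrafilter_exists_le by blast
  moreover have "eventually (\<lambda>x. e \<le> norm (g x)) ?F"
    by (simp add: eventually_inf_principal)
  ultimately show ?thesis
    using that e(1) by (meson filter_leD inf_le1 order_trans)
qed

lemma ultrafilter_bounded_tendsto_Lim:
  fixes h :: "'a \<Rightarrow> 'b::{real_normed_vector, heine_borel}"
  assumes U: "ultrafilter U" and B: "\<And>x. norm (h x) \<le> B"
  shows "(h \<longlongrightarrow> Lim U h) U"
proof -
  have "filtermap h U \<noteq> bot"
    using ultrafilter_nontrivial[OF U] by (simp add: filtermap_bot_iff)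
  moreover have "eventually (\<lambda>y. y \<in> cball 0 B) (filtermap h U)"
    using B by (simp add: eventually_filtermap)
  ultimately obtain l where l: "inf (nhds l) (filtermap h U) \<noteq> bot"
    using compact_filter[THEN iffD1, OF compact_cball] by blast
  have "(h \<longlongrightarrow> l) U"
  proof (rule topological_tendstoI)
    fix S assume S: "open S" "l \<in> S"
    show "eventually (\<lambda>x. h x \<in> S) U"
    proof (rule ccontr)
      assume "\<not> eventually (\<lambda>x. h x \<in> S) U"
      then have "eventually (\<lambda>x. h x \<notin> S) U"
        using U unfolding ultrafilter_def by blast
      then have "eventually (\<lambda>y. y \<notin> S) (filtermap h U)"
        by (simp add: eventually_filtermap)
      moreover have "eventually (\<lambda>y. y \<in> S) (nhds l)"
        using S by (rule eventually_nhds_in_open)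
      ultimately have "eventually (\<lambda>y. False) (inf (nhds l) (filtermap h U))"
        by (auto simp: eventually_inf elim!: eventually_mono)
      with l show False
        by (simp add: trivial_limit_def)
    qed
  qed
  then show ?thesis
    using tendsto_Lim ultrafilter_nontrivial[OF U] by metis
qed

lemma ultrafilter_Lim_add:
  fixes g h :: "'a \<Rightarrow> 'b::{real_normed_vector, heine_borel}"
  assumes U: "ultrafilter U" and "\<And>x. norm (g x) \<le> A" "\<And>x. norm (h x) \<le> B"
  shows "Lim U (\<lambda>x. g x + h x) = Lim U g + Lim U h"
  using assms by (intro tendsto_Lim ultrafilter_nontrivial tendsto_add ultrafilter_bounded_tendsto_Lim)

lemma ultrafilter_Lim_cmult:
  fixes h :: "'a \<Rightarrow> 'b::{real_normed_field, heine_borel}"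
  assumes U: "ultrafilter U" and "\<And>x. norm (h x) \<le> B"
  shows "Lim U (\<lambda>x. c * h x) = c * Lim U h"
  using assms by (intro tendsto_Lim ultrafilter_nontrivial tendsto_mult_left ultrafilter_bounded_tendsto_Lim)

lemma ultrafilter_Lim_norm_le:
  fixes h :: "'a \<Rightarrow> 'b::{real_normed_vector, heine_borel}"
  assumes U: "ultrafilter U" and "\<And>x. norm (h x) \<le> B"
  shows "norm (Lim U h) \<le> B"
  using assms by (intro Lim_norm_ubound[OF _ ultrafilter_bounded_tendsto_Lim]) (auto dest: ultrafilter_nontrivial)

section \<open>Duals of Banach spaces of holomorphic functions\<close>

lemma banach_subspaceD:
  assumes "banach_subspace X nX"
  shows "X \<subseteq> HD" "(\<lambda>z. 0) \<in> X" "\<And>c f. f \<in> X \<Longrightarrow> (\<lambda>z. c * f z) \<in> X"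
    "\<And>f. f \<in> X \<Longrightarrow> 0 \<le> nX f" "\<And>f. f \<in> X \<Longrightarrow> nX f = 0 \<longleftrightarrow> f = (\<lambda>z. 0)"
    "\<And>c f. f \<in> X \<Longrightarrow> nX (\<lambda>z. c * f z) = norm c * nX f"
  using assms unfolding banach_subspace_def by auto

lemma initial_space_banach_subspace: "initial_space X nX \<Longrightarrow> banach_subspace X nX"
  by (simp add: initial_space_def)

lemma initial_space_subseq_uc_conv:
  fixes F :: "nat \<Rightarrow> complex \<Rightarrow> complex"
  assumes "initial_space X nX" and "\<And>n. F n \<in> X" "\<And>n. nX (F n) \<le> 1"
  obtains \<sigma> f where "strict_mono \<sigma>" "f \<in> X" "uc_conv (F \<circ> \<sigma>) f"
  using assms unfolding initial_space_def by blast

lemma banach_subspace_normalize: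
  assumes bs: "banach_subspace X nX" and g: "g \<in> X" "nX g \<noteq> 0"
  shows "(\<lambda>z. of_real (1 / nX g) * g z) \<in> X" "nX (\<lambda>z. of_real (1 / nX g) * g z) = 1"
proof -
  show "(\<lambda>z. of_real (1 / nX g) * g z) \<in> X"
    using banach_subspaceD(3)[OF bs g(1)] .
  have "0 < nX g"
    using banach_subspaceD(4)[OF bs g(1)] g(2) by simp
  then show "nX (\<lambda>z. of_real (1 / nX g) * g z) = 1"
    unfolding banach_subspaceD(6)[OF bs g(1)] by (simp add: norm_divide)
qed

lemma dual_sp_cmult: "\<phi> \<in> dual_sp X nX \<Longrightarrow> f \<in> X \<Longrightarrow> \<phi> (\<lambda>z. c * f z) = c * \<phi> f"
  by (simp add: dual_sp_def)

lemma dual_norm_bdd_above: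
  assumes bs: "banach_subspace X nX" and \<phi>: "\<phi> \<in> dual_sp X nX"
  shows "bdd_above ((\<lambda>f. norm (\<phi> f)) ` {f\<in>X. nX f \<le> 1})"
proof -
  obtain K where K: "\<forall>f\<in>X. norm (\<phi> f) \<le> K * nX f"
    using \<phi> unfolding dual_sp_def by auto
  have "norm (\<phi> f) \<le> \<bar>K\<bar>" if "f \<in> X" "nX f \<le> 1" for f
  proof -
    have "norm (\<phi> f) \<le> K * nX f"
      using K that(1) by blast
    also have "\<dots> \<le> \<bar>K\<bar> * nX f"
      using banach_subspaceD(4)[OF bs that(1)] by (intro mult_right_mono) auto
    also have "\<dots> \<le> \<bar>K\<bar>"
      using banach_subspaceD(4)[OF bs that(1)] that(2) by (intro mult_left_le) auto
    finally show ?thesis .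
  qed
  then show ?thesis
    by (intro bdd_aboveI2) auto
qed

lemma dual_norm_nonneg:
  assumes bs: "banach_subspace X nX" and \<phi>: "\<phi> \<in> dual_sp X nX"
  shows "0 \<le> dual_norm X nX \<phi>"
proof -
  have "(\<lambda>z. 0) \<in> {f\<in>X. nX f \<le> 1}"
    using banach_subspaceD(2)[OF bs] banach_subspaceD(5)[OF bs banach_subspaceD(2)[OF bs]] by simp
  then have "norm (\<phi> (\<lambda>z. 0)) \<le> dual_norm X nX \<phi>"
    unfolding dual_norm_def by (rule cSUP_upper[OF _ dual_norm_bdd_above[OF bs \<phi>]])
  then show ?thesis
    by (rule order_trans[OF norm_ge_zero])
qed

lemma dual_sp_norm_le:
  assumes bs: "banach_subspace X nX" and \<phi>: "\<phi> \<in> dual_sp X nX" and g: "g \<in> X"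
  shows "norm (\<phi> g) \<le> dual_norm X nX \<phi> * nX g"
proof (cases "nX g = 0")
  case True
  have "\<phi> g = \<phi> (\<lambda>z. 0 * g z)"
    using True banach_subspaceD(5)[OF bs g] by simp
  also have "\<dots> = 0 * \<phi> g"
    using \<phi> g by (rule dual_sp_cmult)
  finally show ?thesis
    using True by simp
next
  case False
  define h where "h = (\<lambda>z. of_real (1 / nX g) * g z)"
  have pos: "0 < nX g"
    using False banach_subspaceD(4)[OF bs g] by simp
  have "norm (\<phi> h) \<le> dual_norm X nX \<phi>"
    unfolding dual_norm_def h_def
    using banach_subspace_normalize[OF bs g False]
    by (intro cSUP_upper[OF _ dual_norm_bdd_above[OF bs \<phi>]]) auto
  moreover have "\<phi> h = of_real (1 / nX g) * \<phi> g"
    unfolding h_def using \<phi> g by (rule dual_sp_cmult)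
  ultimately show ?thesis
    using pos by (simp add: norm_mult norm_divide divide_le_eq mult.commute)
qed

text \<open>Unit vectors with \<open>|g(z)| > n\<close> for every \<open>n\<close> would contradict the pointwise
  convergence of a subsequence.\<close>

lemma point_eval_in_dual_sp:
  assumes ini: "initial_space X nX" and z: "z \<in> disk"
  shows "(\<lambda>g. g z) \<in> dual_sp X nX"
proof -
  have bs: "banach_subspace X nX"
    using ini by (rule initial_space_banach_subspace)
  have "\<exists>K. \<forall>g\<in>X. norm (g z) \<le> K * nX g"
  proof (rule ccontr)
    assume "\<not> ?thesis"
    then have "\<forall>n::nat. \<exists>g. g \<in> X \<and> norm (g z) > real n * nX g"
      by (force simp: not_le)
    from choice[OF this] obtain G
      where G: "\<And>n. G n \<in> X" "\<And>n. norm (G n z) > real n * nX (G n)"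
      by blast
    have nonzero: "nX (G n) \<noteq> 0" for n
      using G(2)[of n] banach_subspaceD(5)[OF bs G(1)[of n]] by auto
    define F where "F n = (\<lambda>w. of_real (1 / nX (G n)) * G n w)" for n
    have F: "F n \<in> X" "nX (F n) = 1" for n
      using banach_subspace_normalize[OF bs G(1)[of n] nonzero[of n]] by (simp_all add: F_def)
    have Fz: "norm (F n z) > real n" for n
      using G(2)[of n] nonzero[of n] banach_subspaceD(4)[OF bs G(1)[of n]]
      by (simp add: F_def norm_mult norm_divide pos_less_divide_eq)
    obtain \<sigma> f where \<sigma>: "strict_mono \<sigma>" and "f \<in> X" and "uc_conv (F \<circ> \<sigma>) f"
      by (rule initial_space_subseq_uc_conv[OF ini F(1) eq_refl[OF F(2)]])
    moreover have "compact {z} \<and> {z} \<subseteq> disk"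
      using z by simp
    ultimately have "uniform_limit {z} (F \<circ> \<sigma>) f sequentially"
      unfolding uc_conv_def by blast
    then have "(\<lambda>n. (F \<circ> \<sigma>) n z) \<longlonglongrightarrow> f z"
      by (rule tendsto_uniform_limitI) simp
    then have "bounded (range (\<lambda>n. F (\<sigma> n) z))"
      unfolding comp_def by (rule convergent_imp_bounded)
    then obtain B where B: "\<And>n. norm (F (\<sigma> n) z) \<le> B"
      unfolding bounded_iff by auto
    obtain n where "B < real n"
      using reals_Archimedean2 by blast
    moreover have "real n \<le> real (\<sigma> n)"
      using seq_suble[OF \<sigma>] by simp
    ultimately show False
      using B[of n] Fz[of "\<sigma> n"] by linarith
  qed
  then show ?thesis
    unfolding dual_sp_def by simp
qed

section \<open>Functionals defined as ultralimits\<close>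

lemma ultrafilter_Lim_in_dual_sp:
  fixes M :: "(complex \<Rightarrow> complex) \<Rightarrow> 'a \<Rightarrow> complex"
  assumes U: "ultrafilter U"
    and add: "\<And>g h x. g \<in> X \<Longrightarrow> h \<in> X \<Longrightarrow> M (\<lambda>z. g z + h z) x = M g x + M h x"
    and cmult: "\<And>c g x. g \<in> X \<Longrightarrow> M (\<lambda>z. c * g z) x = c * M g x"
    and bound: "\<And>g x. g \<in> X \<Longrightarrow> norm (M g x) \<le> K * nX g"
  shows "(\<lambda>g. Lim U (M g)) \<in> dual_sp X nX"
  unfolding dual_sp_def
proof (intro CollectI conjI ballI allI exI)
  fix g h assume g: "g \<in> X" and h: "h \<in> X"
  have "M (\<lambda>z. g z + h z) = (\<lambda>x. M g x + M h x)"
    using add[OF g h] by (rule ext)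
  then show "Lim U (M (\<lambda>z. g z + h z)) = Lim U (M g) + Lim U (M h)"
    using ultrafilter_Lim_add[OF U bound[OF g] bound[OF h]] by simp
next
  fix c g assume g: "g \<in> X"
  have "M (\<lambda>z. c * g z) = (\<lambda>x. c * M g x)"
    using cmult[OF g] by (rule ext)
  then show "Lim U (M (\<lambda>z. c * g z)) = c * Lim U (M g)"
    using ultrafilter_Lim_cmult[OF U bound[OF g]] by simp
next
  fix g assume "g \<in> X"
  then show "norm (Lim U (M g)) \<le> K * nX g"
    by (intro ultrafilter_Lim_norm_le[OF U] bound)
qed

lemma ultrafilter_Lim_in_bidual_sp:
  assumes bs: "banach_subspace X nX" and U: "ultrafilter U"
    and F: "\<And>x. F x \<in> X" "\<And>x. nX (F x) \<le> B"
  shows "(\<lambda>\<phi>. Lim U (\<lambda>x. \<phi> (F x))) \<in> bidual_sp X nX"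
proof -
  have bound: "norm (\<phi> (F x)) \<le> dual_norm X nX \<phi> * B" if "\<phi> \<in> dual_sp X nX" for \<phi> x
    using dual_sp_norm_le[OF bs that F(1)] dual_norm_nonneg[OF bs that] F(2)[of x]
    by (meson mult_left_mono order_trans)
  show ?thesis
    unfolding bidual_sp_def
  proof (intro CollectI conjI ballI allI exI)
    fix \<phi> \<psi> assume \<phi>: "\<phi> \<in> dual_sp X nX" and \<psi>: "\<psi> \<in> dual_sp X nX"
    show "Lim U (\<lambda>x. \<phi> (F x) + \<psi> (F x)) = Lim U (\<lambda>x. \<phi> (F x)) + Lim U (\<lambda>x. \<psi> (F x))"
      by (rule ultrafilter_Lim_add[OF U bound[OF \<phi>] bound[OF \<psi>]])
  next
    fix c \<phi> assume \<phi>: "\<phi> \<in> dual_sp X nX"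
    show "Lim U (\<lambda>x. c * \<phi> (F x)) = c * Lim U (\<lambda>x. \<phi> (F x))"
      by (rule ultrafilter_Lim_cmult[OF U bound[OF \<phi>]])
  next
    fix \<phi> assume \<phi>: "\<phi> \<in> dual_sp X nX"
    show "norm (Lim U (\<lambda>x. \<phi> (F x))) \<le> B * dual_norm X nX \<phi>"
      using ultrafilter_Lim_norm_le[OF U bound[OF \<phi>]] by (simp add: mult.commute)
  qed
qed

lemma dil_tendsto_at_left_1:
  assumes f: "f \<in> HD" and z: "z \<in> disk"
  shows "((\<lambda>r. dil r f z) \<longlongrightarrow> f z) (at_left 1)"
proof -
  have "isCont f z"
    using f z holomorphic_on_imp_continuous_on continuous_on_eq_continuous_at[of disk f]
    unfolding HD_def disk_def by blast
  moreover have "((\<lambda>r::real. of_real r * z) \<longlongrightarrow> of_real 1 * z) (at_left 1)"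
    by (intro tendsto_intros)
  ultimately have "((\<lambda>r::real. f (of_real r * z)) \<longlongrightarrow> f z) (at_left 1)"
    using isCont_tendsto_compose by fastforce
  then show ?thesis
    using z by (simp add: dil_def restr_def)
qed

text \<open>The dilations of \<open>f\<close> converge weakly to \<open>f\<close>: their ultralimit is an element of the
  bidual, represented by some \<open>x \<in> X\<close> by reflexivity, and point evaluations identify \<open>x\<close>
  with \<open>f\<close>. Parameters outside \<open>[0,1)\<close> are clamped to \<open>0\<close>, so that every member of the
  family is a dilation.\<close>

lemma dual_sp_zero_on_dilations:
  assumes ini: "initial_space X nX" and refl: "reflexive_sp X nX" and f: "f \<in> X"
    and dil_in: "\<forall>r. 0 \<le> r \<and> r < 1 \<longrightarrow> dil r f \<in> X"
    and dil_le: "\<forall>r. 0 \<le> r \<and> r < 1 \<longrightarrow> nX (dil r f) \<le> C * nX f"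
    and \<psi>: "\<psi> \<in> dual_sp X nX"
    and zero: "\<forall>r. 0 \<le> r \<and> r < 1 \<longrightarrow> \<psi> (dil r f) = 0"
  shows "\<psi> f = 0"
proof -
  have bs: "banach_subspace X nX"
    using ini by (rule initial_space_banach_subspace)
  obtain U where U_le: "U \<le> at_left (1::real)" and U: "ultrafilter U"
    using ultrafilter_exists_le[of "at_left (1::real)"] by auto
  define F where "F r = dil (if 0 \<le> r \<and> r < 1 then r else 0) f" for r :: real
  have F_in: "F r \<in> X" and F_le: "nX (F r) \<le> C * nX f" and \<psi>F: "\<psi> (F r) = 0" for r
    using dil_in dil_le zero unfolding F_def by simp_all
  have "\<exists>x\<in>X. \<forall>\<phi>\<in>dual_sp X nX. Lim U (\<lambda>r. \<phi> (F r)) = \<phi> x"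
    using refl ultrafilter_Lim_in_bidual_sp[OF bs U F_in F_le] unfolding reflexive_sp_def
    by (rule bspec)
  then obtain x where x: "x \<in> X" and x_rep: "\<And>\<phi>. \<phi> \<in> dual_sp X nX \<Longrightarrow> Lim U (\<lambda>r. \<phi> (F r)) = \<phi> x"
    by blast
  have HD: "x \<in> HD" "f \<in> HD"
    using banach_subspaceD(1)[OF bs] x f by auto
  have "x = f"
  proof
    fix z
    show "x z = f z"
    proof (cases "z \<in> disk")
      case False
      then show ?thesis
        using HD unfolding HD_def by simp
    next
      case True
      have "eventually (\<lambda>r. r \<in> {0<..<1}) (at_left (1::real))"
        by (rule eventually_at_left_real) simp
      then have "eventually (\<lambda>r. F r z = dil r f z) (at_left 1)"
        by (rule eventually_mono) (simp add: F_def)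
      then have "((\<lambda>r. F r z) \<longlongrightarrow> f z) (at_left 1)"
        using dil_tendsto_at_left_1[OF HD(2) True] by (simp add: tendsto_cong)
      then have "Lim U (\<lambda>r. F r z) = f z"
        using tendsto_Lim[OF ultrafilter_nontrivial[OF U] tendsto_mono[OF U_le]] by blast
      then show ?thesis
        using x_rep[OF point_eval_in_dual_sp[OF ini True]] by simp
    qed
  qed
  then have "\<psi> f = Lim U (\<lambda>r. \<psi> (F r))"
    using x_rep[OF \<psi>] by simp
  also have "\<dots> = Lim U (\<lambda>r. 0)"
    using \<psi>F by simp
  also have "\<dots> = 0"
    by (rule tendsto_Lim[OF ultrafilter_nontrivial[OF U] tendsto_const])
  finally show ?thesis .
qed

abbreviation at_unit_circle :: "complex filter" where
  "at_unit_circle \<equiv> filtercomap norm (at_left 1)"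

lemma eventually_in_disk_at_unit_circle: "eventually (\<lambda>z. z \<in> disk) at_unit_circle"
proof -
  have "eventually (\<lambda>y. y \<in> {0<..<1}) (at_left (1::real))"
    by (rule eventually_at_left_real) simp
  then show ?thesis
    unfolding eventually_filtercomap disk_def by (auto simp: dist_norm elim!: eventually_mono)
qed

text \<open>If \<open>L f\<close> stayed away from \<open>0\<close>, the pointwise limit of \<open>L\<close> along an ultrafilter of
  points where \<open>|L f| \<ge> e\<close> would be a functional vanishing on the dilations of \<open>f\<close> but not
  on \<open>f\<close>. Outside the disk \<open>L\<close> is replaced by \<open>0\<close>, where it carries no information.\<close>

lemma tendsto_zero_at_unit_circle_if_dilations:
  fixes L :: "(complex \<Rightarrow> complex) \<Rightarrow> complex \<Rightarrow> complex"
  assumes ini: "initial_space X nX" and refl: "reflexive_sp X nX" and f: "f \<in> X"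
    and dil_in: "\<forall>r. 0 \<le> r \<and> r < 1 \<longrightarrow> dil r f \<in> X"
    and dil_le: "\<forall>r. 0 \<le> r \<and> r < 1 \<longrightarrow> nX (dil r f) \<le> C * nX f"
    and add: "\<And>g h z. g \<in> X \<Longrightarrow> h \<in> X \<Longrightarrow> z \<in> disk \<Longrightarrow> L (\<lambda>w. g w + h w) z = L g z + L h z"
    and cmult: "\<And>c g z. g \<in> X \<Longrightarrow> z \<in> disk \<Longrightarrow> L (\<lambda>w. c * g w) z = c * L g z"
    and bound: "\<And>g z. g \<in> X \<Longrightarrow> z \<in> disk \<Longrightarrow> norm (L g z) \<le> K * nX g"
    and dil_lim: "\<forall>r. 0 \<le> r \<and> r < 1 \<longrightarrow> (L (dil r f) \<longlongrightarrow> 0) at_unit_circle"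
  shows "(L f \<longlongrightarrow> 0) at_unit_circle"
proof (rule ccontr)
  assume "\<not> ?thesis"
  then obtain e W where e: "e > 0" and W: "ultrafilter W" and W_circle: "W \<le> at_unit_circle"
    and W_large: "eventually (\<lambda>z. e \<le> norm (L f z)) W"
    by (rule ultrafilter_not_tendsto_zero)
  have W_disk: "eventually (\<lambda>z. z \<in> disk) W"
    by (rule filter_leD[OF W_circle eventually_in_disk_at_unit_circle])
  define M where "M g z = (if z \<in> disk then L g z else 0)" for g z
  have M_bound: "norm (M g z) \<le> K * nX g" if "g \<in> X" for g z
  proof -
    have "0 \<le> K * nX g"
      using bound[OF that, of 0] by (simp add: disk_def) (meson norm_ge_zero order_trans)
    then show ?thesis
      using bound[OF that] by (simp add: M_def)
  qed
  define \<psi> where "\<psi> g = Lim W (M g)" for g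
  have \<psi>: "\<psi> \<in> dual_sp X nX"
    unfolding \<psi>_def
    by (rule ultrafilter_Lim_in_dual_sp[OF W _ _ M_bound]) (simp_all add: M_def add cmult)
  have "\<psi> (dil r f) = 0" if "0 \<le> r \<and> r < 1" for r
  proof -
    have "eventually (\<lambda>z. L (dil r f) z = M (dil r f) z) at_unit_circle"
      using eventually_in_disk_at_unit_circle by (rule eventually_mono) (simp add: M_def)
    then have "(M (dil r f) \<longlongrightarrow> 0) at_unit_circle"
      using dil_lim that Lim_transform_eventually by blast
    then have "(M (dil r f) \<longlongrightarrow> 0) W"
      by (rule tendsto_mono[OF W_circle])
    then show ?thesis
      unfolding \<psi>_def using tendsto_Lim ultrafilter_nontrivial[OF W] by blast
  qed
  then have "\<psi> f = 0"
    using dual_sp_zero_on_dilations[OF ini refl f dil_in dil_le \<psi>] by blast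
  moreover have "e \<le> norm (\<psi> f)"
    unfolding \<psi>_def
  proof (rule Lim_norm_lbound)
    show "\<not> trivial_limit W"
      using ultrafilter_nontrivial[OF W] by simp
    show "(M f \<longlongrightarrow> Lim W (M f)) W"
      using W M_bound[OF f] by (rule ultrafilter_bounded_tendsto_Lim)
    show "eventually (\<lambda>z. e \<le> norm (M f z)) W"
      using W_disk W_large by eventually_elim (simp add: M_def)
  qed
  ultimately show False
    using e by simp
qed

section \<open>Weighted spaces\<close>

lemma HD_continuous_on: "f \<in> HD \<Longrightarrow> continuous_on disk f"
  unfolding HD_def by (blast intro: holomorphic_on_imp_continuous_on)

lemma HD_deriv_continuous_on: "f \<in> HD \<Longrightarrow> continuous_on disk (deriv f)"
  unfolding HD_def disk_def by (blast intro: holomorphic_on_imp_continuous_on holomorphic_deriv)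

lemma HD_field_differentiable: "f \<in> HD \<Longrightarrow> z \<in> disk \<Longrightarrow> f field_differentiable (at z)"
  unfolding HD_def disk_def by (blast intro: holomorphic_on_imp_differentiable_at)

lemma HD_deriv_add:
  "f \<in> HD \<Longrightarrow> g \<in> HD \<Longrightarrow> z \<in> disk \<Longrightarrow> deriv (\<lambda>w. f w + g w) z = deriv f z + deriv g z"
  by (intro deriv_add HD_field_differentiable)

lemma HD_deriv_cmult: "f \<in> HD \<Longrightarrow> z \<in> disk \<Longrightarrow> deriv (\<lambda>w. c * f w) z = c * deriv f z"
  by (intro deriv_cmult HD_field_differentiable)

lemma intrinsic_HD: "intrinsic T \<Longrightarrow> f \<in> HD \<Longrightarrow> T f \<in> HD"
  by (simp add: intrinsic_def)

lemma intrinsic_add: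
  "intrinsic T \<Longrightarrow> f \<in> HD \<Longrightarrow> g \<in> HD \<Longrightarrow> T (\<lambda>z. f z + g z) = (\<lambda>z. T f z + T g z)"
  by (simp add: intrinsic_def)

lemma intrinsic_cmult: "intrinsic T \<Longrightarrow> f \<in> HD \<Longrightarrow> T (\<lambda>z. c * f z) = (\<lambda>z. c * T f z)"
  by (simp add: intrinsic_def)

definition weighted_sp :: "(complex \<Rightarrow> real) \<Rightarrow> ((complex \<Rightarrow> complex) \<Rightarrow> complex \<Rightarrow> complex)
    \<Rightarrow> (complex \<Rightarrow> complex) set" where
  "weighted_sp v D = {f\<in>HD. bounded ((\<lambda>z. v z * norm (D f z)) ` disk)}"

definition little_weighted_sp :: "(complex \<Rightarrow> real) \<Rightarrow> ((complex \<Rightarrow> complex) \<Rightarrow> complex \<Rightarrow> complex)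
    \<Rightarrow> (complex \<Rightarrow> complex) set" where
  "little_weighted_sp v D = {f\<in>HD. ((\<lambda>z. v z * norm (D f z)) \<longlongrightarrow> 0) at_unit_circle}"

lemma Hv_eq_weighted_sp: "Hv v = weighted_sp v (\<lambda>f. f)"
  and Hv0_eq_little_weighted_sp: "Hv0 v = little_weighted_sp v (\<lambda>f. f)"
  and Bv_eq_weighted_sp: "Bv v = weighted_sp v deriv"
  and Bv0_eq_little_weighted_sp: "Bv0 v = little_weighted_sp v deriv"
  by (simp_all add: Hv_def Hv0_def Bv_def Bv0_def weighted_sp_def little_weighted_sp_def)

lemma weighted_sp_le_Hv_norm:
  assumes "h \<in> weighted_sp v (\<lambda>f. f)" "z \<in> disk"
  shows "v z * norm (h z) \<le> Hv_norm v h"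
  using assms unfolding weighted_sp_def Hv_norm_def by (intro cSUP_upper bounded_imp_bdd_above) auto

lemma weighted_sp_le_Bv_norm:
  assumes "h \<in> weighted_sp v deriv" "z \<in> disk"
  shows "v z * norm (deriv h z) \<le> Bv_norm v h"
proof -
  have "v z * norm (deriv h z) \<le> (SUP z\<in>disk. v z * norm (deriv h z))"
    using assms unfolding weighted_sp_def by (intro cSUP_upper bounded_imp_bdd_above) auto
  then show ?thesis
    unfolding Bv_norm_def by (simp add: add_increasing)
qed

lemma typical_weight_continuous_on: "typical_weight v \<Longrightarrow> continuous_on disk v"
  unfolding typical_weight_def by (elim conjE)

lemma typical_weight_pos: "typical_weight v \<Longrightarrow> z \<in> disk \<Longrightarrow> 0 < v z"
  unfolding typical_weight_def by blast

lemma little_weighted_spD: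
  assumes "f \<in> little_weighted_sp v D"
  shows "f \<in> HD" "((\<lambda>z. v z * norm (D f z)) \<longlongrightarrow> 0) at_unit_circle"
  using assms unfolding little_weighted_sp_def by blast+

lemma bounded_image_if_tendsto_zero_at_unit_circle:
  fixes g :: "complex \<Rightarrow> real"
  assumes cont: "continuous_on disk g" and lim: "(g \<longlongrightarrow> 0) at_unit_circle"
  shows "bounded (g ` disk)"
proof -
  have "eventually (\<lambda>z. dist (g z) 0 < 1) at_unit_circle"
    using lim by (rule tendstoD) simp
  then obtain Q where Q: "eventually Q (at_left (1::real))" "\<And>z. Q (norm z) \<Longrightarrow> norm (g z) < 1"
    unfolding eventually_filtercomap by auto
  obtain b0 where b0: "b0 < 1" "\<And>y. b0 < y \<Longrightarrow> y < 1 \<Longrightarrow> Q y"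
    using Q(1) eventually_at_left[of 0 "1::real" Q] by auto
  define b where "b = max b0 0"
  have b: "0 \<le> b" "b < 1" "\<And>y. b < y \<Longrightarrow> y < 1 \<Longrightarrow> Q y"
    using b0 unfolding b_def by auto
  have "compact (g ` cball 0 b)"
    using b(2) by (intro compact_continuous_image continuous_on_subset[OF cont])
      (auto simp: disk_def)
  then have "bounded (g ` cball 0 b)"
    by (rule compact_imp_bounded)
  then obtain B where B: "\<And>z. z \<in> cball 0 b \<Longrightarrow> norm (g z) \<le> B"
    unfolding bounded_iff by blast
  have "norm (g z) \<le> max B 1" if "z \<in> disk" for z
  proof (cases "norm z \<le> b")
    case True
    then show ?thesis
      using B[of z] by simp
  next
    case False
    then show ?thesis
      using that b(3) Q(2)[of z] by (simp add: disk_def)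
  qed
  then show ?thesis
    unfolding bounded_iff by (intro exI[of _ "max B 1"]) auto
qed

lemma little_weighted_sp_subset:
  assumes v: "typical_weight v" and D_cont: "\<And>f. f \<in> HD \<Longrightarrow> continuous_on disk (D f)"
  shows "little_weighted_sp v D \<subseteq> weighted_sp v D"
proof
  fix f assume f: "f \<in> little_weighted_sp v D"
  have "continuous_on disk (\<lambda>z. v z * norm (D f z))"
    using typical_weight_continuous_on[OF v] D_cont[OF little_weighted_spD(1)[OF f]]
    by (intro continuous_on_mult continuous_on_norm)
  then have "bounded ((\<lambda>z. v z * norm (D f z)) ` disk)"
    using little_weighted_spD(2)[OF f] by (rule bounded_image_if_tendsto_zero_at_unit_circle)
  then show "f \<in> weighted_sp v D"
    using little_weighted_spD(1)[OF f] unfolding weighted_sp_def by blast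
qed

lemma tendsto_weighted_zero_iff:
  fixes h :: "complex \<Rightarrow> complex"
  assumes "typical_weight v"
  shows "((\<lambda>z. of_real (v z) * h z) \<longlongrightarrow> 0) at_unit_circle \<longleftrightarrow>
         ((\<lambda>z. v z * norm (h z)) \<longlongrightarrow> 0) at_unit_circle"
proof -
  have "eventually (\<lambda>z. norm (of_real (v z) * h z) = v z * norm (h z)) at_unit_circle"
    using eventually_in_disk_at_unit_circle
  proof (rule eventually_mono)
    fix z assume "z \<in> disk"
    then have "0 < v z"
      by (rule typical_weight_pos[OF assms])
    then show "norm (of_real (v z) * h z) = v z * norm (h z)"
      by (simp add: norm_mult)
  qed
  then show ?thesis
    by (subst tendsto_norm_zero_iff[symmetric]) (rule tendsto_cong)
qed

lemma bounded_op_weighted_sp_into_little: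
  assumes v: "typical_weight v" and ini: "initial_space X nX" and refl: "reflexive_sp X nX"
    and dil_in: "\<forall>f\<in>X. \<forall>r::real. 0 \<le> r \<and> r < 1 \<longrightarrow> dil r f \<in> X"
    and dil_le: "\<forall>f\<in>X. \<forall>r::real. 0 \<le> r \<and> r < 1 \<longrightarrow> nX (dil r f) \<le> C * nX f"
    and T: "intrinsic T"
    and D_add: "\<And>f g z. f \<in> HD \<Longrightarrow> g \<in> HD \<Longrightarrow> z \<in> disk \<Longrightarrow>
      D (\<lambda>w. f w + g w) z = D f z + D g z"
    and D_cmult: "\<And>c f z. f \<in> HD \<Longrightarrow> z \<in> disk \<Longrightarrow> D (\<lambda>w. c * f w) z = c * D f z"
    and nY: "\<And>h z. h \<in> weighted_sp v D \<Longrightarrow> z \<in> disk \<Longrightarrow> v z * norm (D h z) \<le> nY h"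
    and dil_little: "\<forall>f\<in>X. \<forall>r::real. 0 \<le> r \<and> r < 1 \<longrightarrow> T (dil r f) \<in> little_weighted_sp v D"
    and bo: "bounded_op X nX T (weighted_sp v D) nY"
    and f: "f \<in> X"
  shows "T f \<in> little_weighted_sp v D"
proof -
  obtain K where K: "\<And>g. g \<in> X \<Longrightarrow> nY (T g) \<le> K * nX g"
    using bo unfolding bounded_op_def by blast
  have XH: "\<And>g. g \<in> X \<Longrightarrow> g \<in> HD"
    using ini banach_subspaceD(1) initial_space_banach_subspace by blast
  define L where "L g z = of_real (v z) * D (T g) z" for g z
  have "(L f \<longlongrightarrow> 0) at_unit_circle"
  proof (rule tendsto_zero_at_unit_circle_if_dilations[OF ini refl f])
    show "\<forall>r. 0 \<le> r \<and> r < 1 \<longrightarrow> dil r f \<in> X" "\<forall>r. 0 \<le> r \<and> r < 1 \<longrightarrow> nX (dil r f) \<le> C * nX f"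
      using dil_in dil_le f by blast+
    show "L (\<lambda>w. g w + h w) z = L g z + L h z" if "g \<in> X" "h \<in> X" "z \<in> disk" for g h z
      using that XH intrinsic_HD[OF T] intrinsic_add[OF T] D_add by (simp add: L_def distrib_left)
    show "L (\<lambda>w. c * g w) z = c * L g z" if "g \<in> X" "z \<in> disk" for c g z
      using that XH intrinsic_HD[OF T] intrinsic_cmult[OF T] D_cmult by (simp add: L_def)
    show "norm (L g z) \<le> K * nX g" if "g \<in> X" "z \<in> disk" for g z
      using that bo nY[of "T g" z] K[of g] typical_weight_pos[OF v]
      by (simp add: L_def bounded_op_def norm_mult less_imp_le)
    show "\<forall>r. 0 \<le> r \<and> r < 1 \<longrightarrow> (L (dil r f) \<longlongrightarrow> 0) at_unit_circle"
    proof (intro allI impI)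
      fix r :: real assume "0 \<le> r \<and> r < 1"
      then have "T (dil r f) \<in> little_weighted_sp v D"
        using dil_little f by blast
      then show "(L (dil r f) \<longlongrightarrow> 0) at_unit_circle"
        unfolding L_def tendsto_weighted_zero_iff[OF v] by (rule little_weighted_spD(2))
    qed
  qed
  then have "((\<lambda>z. v z * norm (D (T f) z)) \<longlongrightarrow> 0) at_unit_circle"
    unfolding L_def tendsto_weighted_zero_iff[OF v] .
  then show ?thesis
    using intrinsic_HD[OF T XH[OF f]] unfolding little_weighted_sp_def by blast
qed

lemma bounded_op_weighted_sp_iff_little:
  assumes v: "typical_weight v" and ini: "initial_space X nX" and refl: "reflexive_sp X nX"
    and dil_in: "\<forall>f\<in>X. \<forall>r::real. 0 \<le> r \<and> r < 1 \<longrightarrow> dil r f \<in> X"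
    and dil_le: "\<forall>f\<in>X. \<forall>r::real. 0 \<le> r \<and> r < 1 \<longrightarrow> nX (dil r f) \<le> C * nX f"
    and T: "intrinsic T"
    and D_add: "\<And>f g z. f \<in> HD \<Longrightarrow> g \<in> HD \<Longrightarrow> z \<in> disk \<Longrightarrow>
      D (\<lambda>w. f w + g w) z = D f z + D g z"
    and D_cmult: "\<And>c f z. f \<in> HD \<Longrightarrow> z \<in> disk \<Longrightarrow> D (\<lambda>w. c * f w) z = c * D f z"
    and D_cont: "\<And>f. f \<in> HD \<Longrightarrow> continuous_on disk (D f)"
    and nY: "\<And>h z. h \<in> weighted_sp v D \<Longrightarrow> z \<in> disk \<Longrightarrow> v z * norm (D h z) \<le> nY h"
    and dil_little: "\<forall>f\<in>X. \<forall>r::real. 0 \<le> r \<and> r < 1 \<longrightarrow> T (dil r f) \<in> little_weighted_sp v D"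
  shows "bounded_op X nX T (weighted_sp v D) nY \<longleftrightarrow> bounded_op X nX T (little_weighted_sp v D) nY"
proof
  assume bo: "bounded_op X nX T (weighted_sp v D) nY"
  then show "bounded_op X nX T (little_weighted_sp v D) nY"
    using bounded_op_weighted_sp_into_little[OF v ini refl dil_in dil_le T D_add D_cmult nY dil_little bo]
    unfolding bounded_op_def by blast
next
  assume "bounded_op X nX T (little_weighted_sp v D) nY"
  then show "bounded_op X nX T (weighted_sp v D) nY"
    using little_weighted_sp_subset[of v D, OF v D_cont] unfolding bounded_op_def by blast
qed

theorem corollary3p2:
  fixes v :: "complex \<Rightarrow> real"
    and X :: "(complex \<Rightarrow> complex) set"
    and nX :: "(complex \<Rightarrow> complex) \<Rightarrow> real"
    and T :: "(complex \<Rightarrow> complex) \<Rightarrow> complex \<Rightarrow> complex"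
    and C :: real
  assumes "typical_weight v"
    and "initial_space X nX"
    and "reflexive_sp X nX"
    and "\<forall>f\<in>X. \<forall>r::real. 0 \<le> r \<and> r < 1 \<longrightarrow> dil r f \<in> X"
    and "\<forall>f\<in>X. \<forall>r::real. 0 \<le> r \<and> r < 1 \<longrightarrow> nX (dil r f) \<le> C * nX f"
    and "intrinsic T"
  shows "((\<forall>f\<in>X. \<forall>r::real. 0 \<le> r \<and> r < 1 \<longrightarrow> T (dil r f) \<in> Hv0 v) \<longrightarrow>
            (bounded_op X nX T (Hv v) (Hv_norm v) \<longleftrightarrow> bounded_op X nX T (Hv0 v) (Hv_norm v)))
       \<and> ((\<forall>f\<in>X. \<forall>r::real. 0 \<le> r \<and> r < 1 \<longrightarrow> T (dil r f) \<in> Bv0 v) \<longrightarrow>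
            (bounded_op X nX T (Bv v) (Bv_norm v) \<longleftrightarrow> bounded_op X nX T (Bv0 v) (Bv_norm v)))"
  unfolding Hv_eq_weighted_sp Hv0_eq_little_weighted_sp Bv_eq_weighted_sp Bv0_eq_little_weighted_sp
proof (intro conjI impI)
  show "bounded_op X nX T (weighted_sp v (\<lambda>f. f)) (Hv_norm v) \<longleftrightarrow>
      bounded_op X nX T (little_weighted_sp v (\<lambda>f. f)) (Hv_norm v)"
    if "\<forall>f\<in>X. \<forall>r::real. 0 \<le> r \<and> r < 1 \<longrightarrow> T (dil r f) \<in> little_weighted_sp v (\<lambda>f. f)"
    by (rule bounded_op_weighted_sp_iff_little[OF assms _ _ _ _ that])
      (simp_all add: weighted_sp_le_Hv_norm HD_continuous_on)
  show "bounded_op X nX T (weighted_sp v deriv) (Bv_norm v) \<longleftrightarrow>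
      bounded_op X nX T (little_weighted_sp v deriv) (Bv_norm v)"
    if "\<forall>f\<in>X. \<forall>r::real. 0 \<le> r \<and> r < 1 \<longrightarrow> T (dil r f) \<in> little_weighted_sp v deriv"
    by (rule bounded_op_weighted_sp_iff_little[OF assms HD_deriv_add HD_deriv_cmult
          HD_deriv_continuous_on weighted_sp_le_Bv_norm that])
qed

end
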